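(* Let $\mathcal{X},\mathcal{Y}$ be finite, $P_X$ a distribution on $\mathcal{X}$, $R\ge0$, and $M=\exp(nR)$. For any joint $n$-type $Q_{\bar X\bar Y}\in\mathcal{P}_n(\mathcal{X}\times\mathcal{Y})$ with $\mathcal{Y}$-marginal $Q_{\bar Y}$, \[ D(Q_{\bar X\bar Y}\|P_XQ_{\bar Y})+\tfrac12\big[R-D(Q_{\bar X\bar Y}\|P_XQ_{\bar Y})\big]_+\le-\frac1n\log\Big(\tfrac12\mathfrak{Y}(M,Q_{\bar X\bar Y})\Big)\le D(Q_{\bar X\bar Y}\|P_XQ_{\bar Y})+\tfrac12\big[R-D(Q_{\bar X\bar Y}\|P_XQ_{\bar Y})\big]_++\kappa_n, \] where $[f]_+=\max\{0,f\}$ and $\kappa_n=\frac{|\mathcal{X}||\mathcal{Y}|}{n}\log(n+1)+\frac1n\log2$.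
   Context: Logs and exps use a common base; $D$ is relative entropy. For $y^n$ of type $Q_{\bar Y}$, let $Q_{\bar X|\bar Y}$ be the conditional type with $Q_{\bar X|\bar Y}Q_{\bar Y}=Q_{\bar X\bar Y}$, let $\mathcal{T}^n_{Q_{\bar X|\bar Y}}(y^n)$ be the set of $x^n$ whose joint empirical distribution with $y^n$ is $Q_{\bar X\bar Y}$, and $p_{Q_{\bar X|\bar Y}}(y^n)=\mathbb{P}[X^n\in\mathcal{T}^n_{Q_{\bar X|\bar Y}}(y^n)]$ with $X^n$ i.i.d. $P_X$ (this depends on $y^n$ only through $Q_{\bar Y}$). Define $\mathfrak{Y}(M,Q_{\bar X\bar Y})=\min\{2p_{Q_{\bar X|\bar Y}}(y^n),\,M^{-1/2}p_{Q_{\bar X|\bar Y}}^{1/2}(y^n)\}$. *)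

theory Defs
  imports "HOL-Analysis.Analysis" "HOL-Library.Extended_Real"
begin

(* Sequences of length n are lists of length n.  Natural logarithm / exp
   are used as the common base. *)

definition joint_type :: "'a list \<Rightarrow> 'b list \<Rightarrow> ('a \<times> 'b \<Rightarrow> real)" where
  "joint_type xs ys = (\<lambda>(a, b). real (card {i. i < length xs \<and> xs ! i = a \<and> ys ! i = b})
                                  / real (length xs))"

definition seq_type :: "'b list \<Rightarrow> ('b \<Rightarrow> real)" where
  "seq_type ys = (\<lambda>b. real (card {i. i < length ys \<and> ys ! i = b}) / real (length ys))"

definition is_joint_n_type :: "nat \<Rightarrow> ('a \<times> 'b \<Rightarrow> real) \<Rightarrow> bool" where
  "is_joint_n_type n Q \<longleftrightarrow> (\<exists>xs ys. length xs = n \<and> length ys = n \<and> Q = joint_type xs ys)"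

definition marg_Y :: "('a::finite \<times> 'b \<Rightarrow> real) \<Rightarrow> 'b \<Rightarrow> real" where
  "marg_Y Q b = (\<Sum>a\<in>UNIV. Q (a, b))"

definition cond_type_class :: "('a \<times> 'b \<Rightarrow> real) \<Rightarrow> 'b list \<Rightarrow> 'a list set" where
  "cond_type_class Q ys = {xs. length xs = length ys \<and> joint_type xs ys = Q}"

definition p_cond :: "('a \<Rightarrow> real) \<Rightarrow> ('a \<times> 'b \<Rightarrow> real) \<Rightarrow> 'b list \<Rightarrow> real" where
  "p_cond PX Q ys = (\<Sum>xs\<in>cond_type_class Q ys. \<Prod>i<length ys. PX (xs ! i))"

definition frakY :: "('a \<Rightarrow> real) \<Rightarrow> real \<Rightarrow> ('a \<times> 'b \<Rightarrow> real) \<Rightarrow> 'b list \<Rightarrow> real" where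
  "frakY PX M Q ys = min (2 * p_cond PX Q ys) (M powr (-1/2) * sqrt (p_cond PX Q ys))"

definition rel_entropy :: "('c::finite \<Rightarrow> real) \<Rightarrow> ('c \<Rightarrow> real) \<Rightarrow> ereal" where
  "rel_entropy Q P = (if \<exists>z. Q z > 0 \<and> P z = 0 then \<infinity>
     else ereal (\<Sum>z\<in>UNIV. if Q z = 0 then 0 else Q z * ln (Q z / P z)))"

definition prod_ref :: "('a \<Rightarrow> real) \<Rightarrow> ('b \<Rightarrow> real) \<Rightarrow> ('a \<times> 'b \<Rightarrow> real)" where
  "prod_ref PX QY = (\<lambda>(a, b). PX a * QY b)"

definition neg_norm_log :: "nat \<Rightarrow> real \<Rightarrow> ereal" where
  "neg_norm_log n t = (if t = 0 then \<infinity> else ereal (- (1 / real n) * ln t))"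

definition pos_part :: "ereal \<Rightarrow> ereal" where
  "pos_part f = max 0 f"

end

theory Submission
  imports Defs "HOL-Library.Multiset"
begin

text \<open>Method of types. Let \<open>N\<close> be the joint counts of \<open>Q\<close> and \<open>m\<^sub>b\<close> the counts of \<open>ys\<close>.
  Every sequence in the conditional type class has probability \<open>\<Prod> P\<^sub>X(a) ^ N(a,b)\<close>, so
  \<open>p = |T| \<Prod> P\<^sub>X(a) ^ N(a,b)\<close>, while \<open>exp (-n D) = \<Prod> P\<^sub>X(a) ^ N(a,b) \<cdot> \<Prod> m\<^sub>b ^ m\<^sub>b / \<Prod> N(a,b) ^ N(a,b)\<close>.
  By the multinomial theorem, \<open>\<Prod> m\<^sub>b ^ m\<^sub>b\<close> is the sum over all \<open>xs\<close> of \<open>\<Prod> N(a,b) ^ N'(a,b)\<close>, where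
  \<open>N'\<close> are the joint counts of \<open>xs\<close> and \<open>ys\<close>; grouping the sum by \<open>N'\<close>, the group \<open>N' = N\<close> is the
  largest of at most \<open>(n + 1) ^ (|X| |Y|)\<close> groups. Hence
  \<open>exp (-n D) / (n + 1) ^ (|X| |Y|) \<le> p \<le> exp (-n D)\<close>, and taking logarithms of
  \<open>min p (M ^ (-1/2) sqrt p / 2)\<close> gives both bounds.\<close>

definition joint_count :: "'a list \<Rightarrow> 'b list \<Rightarrow> 'a \<times> 'b \<Rightarrow> nat" where
  "joint_count xs ys = count (mset (zip xs ys))"

definition joint_class :: "'b list \<Rightarrow> ('a \<times> 'b \<Rightarrow> nat) \<Rightarrow> 'a list set" where
  "joint_class ys N = {xs. length xs = length ys \<and> joint_count xs ys = N}"

definition column_sum :: "('a::finite \<times> 'b \<Rightarrow> nat) \<Rightarrow> 'b \<Rightarrow> nat" where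
  "column_sum N b = (\<Sum>a\<in>UNIV. N (a, b))"

lemma joint_count_Nil [simp]: "joint_count [] ys = (\<lambda>_. 0)"
  by (auto simp: joint_count_def)

lemma joint_count_Cons [simp]:
  "joint_count (x # xs) (y # ys) p = joint_count xs ys p + (if p = (x, y) then 1 else 0)"
  by (auto simp: joint_count_def)

lemma finite_lists_length_eq_UNIV: "finite {xs :: 'a::finite list. length xs = n}"
  using finite_lists_length_eq[of "UNIV :: 'a set" n] by simp

lemma finite_joint_class: "finite (joint_class ys (N :: 'a::finite \<times> 'b \<Rightarrow> nat))"
  by (rule finite_subset[OF _ finite_lists_length_eq_UNIV]) (auto simp: joint_class_def)

lemma column_sum_joint_count:
  fixes xs :: "'a::finite list"
  assumes "length xs = length ys"
  shows "column_sum (joint_count xs ys) = count (mset ys)"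
  using assms
proof (induction xs ys rule: list_induct2)
  case (Cons x xs y ys)
  have "(\<Sum>a\<in>UNIV. if (a, b) = (x, y) then 1 else 0) = (if b = y then 1 else (0::nat))" for b
    by (cases "b = y") auto
  with Cons show ?case
    by (auto simp: fun_eq_iff column_sum_def sum.distrib)
qed (simp add: fun_eq_iff column_sum_def)

lemma column_sum_fun_upd_pred:
  fixes N :: "'a::finite \<times> 'b \<Rightarrow> nat"
  assumes "N (a, b) > 0"
  shows "column_sum (N((a, b) := N (a, b) - 1)) = (column_sum N)(b := column_sum N b - 1)"
proof
  fix b'
  have split: "sum f UNIV = f a + sum f (UNIV - {a})" for f :: "'a \<Rightarrow> nat"
    by (rule sum.remove) auto
  show "column_sum (N((a, b) := N (a, b) - 1)) b' = ((column_sum N)(b := column_sum N b - 1)) b'"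
    using assms split[of "\<lambda>a'. (N((a, b) := N (a, b) - 1)) (a', b)"] split[of "\<lambda>a'. N (a', b)"]
    by (auto simp: column_sum_def)
qed

lemma prod_fact_fun_upd_pred:
  fixes N :: "'c::finite \<Rightarrow> nat"
  assumes "N p > 0"
  shows "(\<Prod>q\<in>UNIV. fact (N q)) = N p * (\<Prod>q\<in>UNIV. fact ((N(p := N p - 1)) q) :: nat)"
proof -
  have split: "prod f UNIV = f p * prod f (UNIV - {p})" for f :: "'c \<Rightarrow> nat"
    by (rule prod.remove) auto
  show ?thesis
    using assms fact_reduce[OF assms, where 'a = nat]
      split[of "\<lambda>q. fact (N q)"] split[of "\<lambda>q. fact ((N(p := N p - 1)) q)"]
    by simp
qed

lemma joint_class_Cons:
  "joint_class (y # ys) N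
     = (\<Union>a\<in>{a. N (a, y) > 0}. (#) a ` joint_class ys (N((a, y) := N (a, y) - 1)))"
proof (intro equalityI subsetI)
  fix xs assume "xs \<in> joint_class (y # ys) N"
  then obtain a xs' where xs: "xs = a # xs'" "length xs' = length ys" "joint_count (a # xs') (y # ys) = N"
    by (auto simp: joint_class_def length_Suc_conv)
  then have "N p = joint_count xs' ys p + (if p = (a, y) then 1 else 0)" for p
    by auto
  then have "N (a, y) > 0" "joint_count xs' ys = N((a, y) := N (a, y) - 1)"
    by (auto simp: fun_eq_iff)
  with xs show "xs \<in> (\<Union>a\<in>{a. N (a, y) > 0}. (#) a ` joint_class ys (N((a, y) := N (a, y) - 1)))"
    by (auto simp: joint_class_def)
qed (auto simp: joint_class_def fun_eq_iff)

lemma card_joint_class_mult_fact: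
  fixes N :: "'a::finite \<times> 'b::finite \<Rightarrow> nat"
  assumes "column_sum N = count (mset ys)"
  shows "card (joint_class ys N) * (\<Prod>p\<in>UNIV. fact (N p)) = (\<Prod>b\<in>UNIV. fact (count (mset ys) b))"
  using assms
proof (induction ys arbitrary: N)
  case Nil
  then have "N = (\<lambda>_. 0)"
    by (auto simp: fun_eq_iff column_sum_def)
  then have "joint_class [] N = {[]}"
    by (auto simp: joint_class_def)
  with \<open>N = (\<lambda>_. 0)\<close> show ?case by simp
next
  case (Cons y ys)
  define A where "A = {a. N (a, y) > 0}"
  define N' where "N' a = N((a, y) := N (a, y) - 1)" for a
  define F where "F = (\<Prod>b\<in>UNIV. fact (count (mset ys) b) :: nat)"
  have "card (joint_class (y # ys) N) = (\<Sum>a\<in>A. card ((#) a ` joint_class ys (N' a)))"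
    unfolding joint_class_Cons A_def N'_def
    by (rule card_UN_disjoint) (auto intro: finite_joint_class)
  also have "\<dots> = (\<Sum>a\<in>A. card (joint_class ys (N' a)))"
    by (intro sum.cong refl card_image) auto
  finally have card_Cons: "card (joint_class (y # ys) N) = (\<Sum>a\<in>A. card (joint_class ys (N' a)))" .
  have "card (joint_class ys (N' a)) * (\<Prod>p\<in>UNIV. fact (N p)) = N (a, y) * F" if "a \<in> A" for a
  proof -
    have pos: "N (a, y) > 0" using that by (simp add: A_def)
    have "column_sum (N' a) = count (mset ys)"
      using column_sum_fun_upd_pred[of N a y, OF pos] Cons.prems by (auto simp: N'_def fun_eq_iff)
    then have "card (joint_class ys (N' a)) * (\<Prod>p\<in>UNIV. fact (N' a p)) = F"
      unfolding F_def by (rule Cons.IH)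
    then show ?thesis
      using prod_fact_fun_upd_pred[of N "(a, y)"] pos by (simp add: N'_def algebra_simps)
  qed
  then have "card (joint_class (y # ys) N) * (\<Prod>p\<in>UNIV. fact (N p)) = (\<Sum>a\<in>A. N (a, y)) * F"
    unfolding card_Cons sum_distrib_right by (intro sum.cong) auto
  also have "(\<Sum>a\<in>A. N (a, y)) = column_sum N y"
    unfolding column_sum_def A_def by (rule sum.mono_neutral_left) auto
  also have "\<dots> * F = (\<Prod>b\<in>UNIV. fact (count (mset (y # ys)) b))"
    using Cons.prems by (simp add: F_def prod.remove[of UNIV y] algebra_simps)
  finally show ?case .
qed

lemma prod_list_map_eq_prod_count:
  fixes f :: "'c::finite \<Rightarrow> 'd::comm_monoid_mult"
  shows "prod_list (map f zs) = (\<Prod>x\<in>UNIV. f x ^ count (mset zs) x)"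
proof (induction zs)
  case (Cons z zs)
  have "(\<Prod>x\<in>UNIV. f x ^ count (mset (z # zs)) x)
      = (\<Prod>x\<in>UNIV. f x ^ count (mset zs) x * (if x = z then f x else 1))"
    by (intro prod.cong) (auto simp: mult_ac)
  also have "\<dots> = (\<Prod>x\<in>UNIV. f x ^ count (mset zs) x) * f z"
    by (simp add: prod.distrib prod.delta')
  finally show ?case using Cons by (simp add: mult.commute)
qed simp

lemma sum_lists_prod_list_zip:
  fixes V :: "'a::finite \<times> 'b \<Rightarrow> 'c::comm_semiring_1"
  shows "(\<Sum>xs | length xs = length ys. prod_list (map V (zip xs ys)))
         = prod_list (map (\<lambda>b. \<Sum>a\<in>UNIV. V (a, b)) ys)"
proof (induction ys)
  case Nil
  have "{xs :: 'a list. length xs = 0} = {[]}" by auto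
  then show ?case by simp
next
  case (Cons y ys)
  let ?L = "{xs :: 'a list. length xs = length ys}"
  have eq: "{xs. length xs = length (y # ys)} = (\<lambda>(a, xs). a # xs) ` (UNIV \<times> ?L)"
    by (auto simp: image_iff length_Suc_conv)
  have inj: "inj_on (\<lambda>(a, xs). a # xs) (UNIV \<times> ?L)"
    by (auto simp: inj_on_def)
  have "(\<Sum>xs | length xs = length (y # ys). prod_list (map V (zip xs (y # ys))))
      = (\<Sum>(a, xs)\<in>UNIV \<times> ?L. V (a, y) * prod_list (map V (zip xs ys)))"
    unfolding eq by (subst sum.reindex[OF inj]) (simp add: case_prod_unfold)
  also have "\<dots> = (\<Sum>a\<in>UNIV. V (a, y)) * (\<Sum>xs\<in>?L. prod_list (map V (zip xs ys)))"
    by (simp add: sum.cartesian_product[symmetric] sum_product)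
  finally show ?case using Cons by simp
qed

lemma sum_prod_power_joint_count:
  fixes V :: "'a::finite \<times> 'b::finite \<Rightarrow> 'c::comm_semiring_1"
  shows "(\<Sum>xs | length xs = length ys. \<Prod>p\<in>UNIV. V p ^ joint_count xs ys p)
         = (\<Prod>b\<in>UNIV. (\<Sum>a\<in>UNIV. V (a, b)) ^ count (mset ys) b)"
proof -
  have "(\<Sum>xs | length xs = length ys. \<Prod>p\<in>UNIV. V p ^ joint_count xs ys p)
      = (\<Sum>xs | length xs = length ys. prod_list (map V (zip xs ys)))"
    by (intro sum.cong) (auto simp: prod_list_map_eq_prod_count joint_count_def)
  also have "\<dots> = prod_list (map (\<lambda>b. \<Sum>a\<in>UNIV. V (a, b)) ys)"
    by (rule sum_lists_prod_list_zip)
  also have "\<dots> = (\<Prod>b\<in>UNIV. (\<Sum>a\<in>UNIV. V (a, b)) ^ count (mset ys) b)"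
    by (rule prod_list_map_eq_prod_count)
  finally show ?thesis .
qed

lemma sum_prod_power_joint_count_column_sum:
  fixes N :: "'a::finite \<times> 'b::finite \<Rightarrow> nat"
  assumes "column_sum N = count (mset ys)"
  shows "(\<Sum>xs | length xs = length ys. \<Prod>p\<in>UNIV. N p ^ joint_count xs ys p)
         = (\<Prod>b\<in>UNIV. count (mset ys) b ^ count (mset ys) b)"
  using sum_prod_power_joint_count[of N ys] assms by (simp add: column_sum_def fun_eq_iff)

lemma card_joint_class_upper:
  fixes N :: "'a::finite \<times> 'b::finite \<Rightarrow> nat"
  assumes "column_sum N = count (mset ys)"
  shows "card (joint_class ys N) * (\<Prod>p\<in>UNIV. N p ^ N p)
         \<le> (\<Prod>b\<in>UNIV. count (mset ys) b ^ count (mset ys) b)"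
proof -
  have "card (joint_class ys N) * (\<Prod>p\<in>UNIV. N p ^ N p)
      = (\<Sum>xs\<in>joint_class ys N. \<Prod>p\<in>UNIV. N p ^ joint_count xs ys p)"
    by (simp add: joint_class_def)
  also have "\<dots> \<le> (\<Sum>xs | length xs = length ys. \<Prod>p\<in>UNIV. N p ^ joint_count xs ys p)"
    by (rule sum_mono2[OF finite_lists_length_eq_UNIV]) (auto simp: joint_class_def)
  finally show ?thesis
    using sum_prod_power_joint_count_column_sum[OF assms] by simp
qed

text \<open>Equivalently, \<open>c ^ k / k!\<close> is largest at \<open>k = c\<close>.\<close>

lemma power_mult_fact_le: "(c::nat) ^ k * fact c \<le> c ^ c * fact k"
proof (cases "k \<le> c")
  case True
  have "fact c = prod Suc {k..<c} * fact k"
    using fact_split[of "c - k" c, where 'a = nat] True by (simp add: of_nat_id)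
  also have "\<dots> \<le> c ^ (c - k) * fact k"
    using prod_mono[of "{k..<c}" Suc "\<lambda>_. c"] by (intro mult_right_mono) auto
  finally have "c ^ k * fact c \<le> c ^ k * c ^ (c - k) * fact k"
    by (simp add: mult.assoc)
  then show ?thesis
    using True by (simp add: power_add[symmetric])
next
  case False
  have "c ^ (k - c) * fact c \<le> prod Suc {c..<k} * fact c"
    using prod_mono[of "{c..<k}" "\<lambda>_. c" Suc] by (intro mult_right_mono) auto
  also have "\<dots> = fact k"
    using fact_split[of "k - c" k, where 'a = nat] False by (simp add: of_nat_id)
  finally have "c ^ c * (c ^ (k - c) * fact c) \<le> c ^ c * fact k"
    by simp
  moreover have "c ^ k = c ^ c * c ^ (k - c)"
    using False by (simp add: power_add[symmetric])
  ultimately show ?thesis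
    by (metis mult.assoc)
qed

lemma joint_class_weight_le:
  fixes N M :: "'a::finite \<times> 'b::finite \<Rightarrow> nat"
  assumes "column_sum N = count (mset ys)" and "column_sum M = count (mset ys)"
  shows "card (joint_class ys M) * (\<Prod>p\<in>UNIV. N p ^ M p) \<le> card (joint_class ys N) * (\<Prod>p\<in>UNIV. N p ^ N p)"
proof -
  define F where "F = (\<Prod>b\<in>UNIV. fact (count (mset ys) b) :: nat)"
  define fM where "fM = (\<Prod>p\<in>UNIV. fact (M p) :: nat)"
  define fN where "fN = (\<Prod>p\<in>UNIV. fact (N p) :: nat)"
  have F: "F = card (joint_class ys M) * fM" "F = card (joint_class ys N) * fN"
    using card_joint_class_mult_fact[OF assms(2)] card_joint_class_mult_fact[OF assms(1)]
    by (simp_all add: F_def fM_def fN_def)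
  have "(\<Prod>p\<in>UNIV. N p ^ M p * fact (N p)) \<le> (\<Prod>p\<in>UNIV. N p ^ N p * fact (M p))"
    by (intro prod_mono) (auto simp: power_mult_fact_le)
  then have weights: "(\<Prod>p\<in>UNIV. N p ^ M p) * fN \<le> (\<Prod>p\<in>UNIV. N p ^ N p) * fM"
    by (simp add: fM_def fN_def prod.distrib)
  have "card (joint_class ys M) * (\<Prod>p\<in>UNIV. N p ^ M p) * (fM * fN)
      = F * ((\<Prod>p\<in>UNIV. N p ^ M p) * fN)"
    using F(1) by (simp add: mult_ac)
  also have "\<dots> \<le> F * ((\<Prod>p\<in>UNIV. N p ^ N p) * fM)"
    using weights by simp
  also have "\<dots> = card (joint_class ys N) * (\<Prod>p\<in>UNIV. N p ^ N p) * (fM * fN)"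
    using F(2) by (simp add: mult_ac)
  finally show ?thesis
    by (simp add: fM_def fN_def)
qed

lemma card_joint_count_image_le:
  fixes ys :: "'b::finite list"
  shows "card ((\<lambda>xs. joint_count xs ys) ` {xs :: 'a::finite list. length xs = length ys})
         \<le> (length ys + 1) ^ (CARD('a) * CARD('b))"
proof -
  have "(\<lambda>xs. joint_count xs ys) ` {xs :: 'a list. length xs = length ys}
      \<subseteq> PiE UNIV (\<lambda>_. {0..length ys})"
    using count_le_size[of "mset (zip _ ys)"] by (fastforce simp: joint_count_def PiE_UNIV_domain)
  then have "card ((\<lambda>xs. joint_count xs ys) ` {xs :: 'a list. length xs = length ys})
      \<le> card (PiE UNIV (\<lambda>_::'a \<times> 'b. {0..length ys}))"
    by (intro card_mono finite_PiE) auto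
  also have "\<dots> = (length ys + 1) ^ (CARD('a) * CARD('b))"
    by (simp add: card_PiE card_prod)
  finally show ?thesis .
qed

lemma card_joint_class_lower:
  fixes N :: "'a::finite \<times> 'b::finite \<Rightarrow> nat"
  assumes "column_sum N = count (mset ys)"
  shows "(\<Prod>b\<in>UNIV. count (mset ys) b ^ count (mset ys) b)
         \<le> (length ys + 1) ^ (CARD('a) * CARD('b)) * (card (joint_class ys N) * (\<Prod>p\<in>UNIV. N p ^ N p))"
proof -
  define L where "L = {xs :: 'a list. length xs = length ys}"
  define T where "T = (\<lambda>xs. joint_count xs ys) ` L"
  let ?w = "\<lambda>M. card (joint_class ys M) * (\<Prod>p\<in>UNIV. N p ^ M p)"
  have "(\<Prod>b\<in>UNIV. count (mset ys) b ^ count (mset ys) b)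
      = (\<Sum>xs\<in>L. \<Prod>p\<in>UNIV. N p ^ joint_count xs ys p)"
    using sum_prod_power_joint_count_column_sum[OF assms] by (simp add: L_def)
  also have "\<dots> = (\<Sum>M\<in>T. \<Sum>xs | xs \<in> L \<and> joint_count xs ys = M. \<Prod>p\<in>UNIV. N p ^ joint_count xs ys p)"
    unfolding T_def by (rule sum.image_gen) (simp add: L_def finite_lists_length_eq_UNIV)
  also have "\<dots> = (\<Sum>M\<in>T. ?w M)"
    by (intro sum.cong refl) (simp add: joint_class_def L_def conj_commute)
  also have "\<dots> \<le> card T * ?w N"
  proof (rule sum_bounded_above[where 'a = nat, simplified])
    fix M assume "M \<in> T"
    then obtain xs where "length xs = length ys" "M = joint_count xs ys"
      by (auto simp: T_def L_def)
    then have "column_sum M = count (mset ys)"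
      by (simp add: column_sum_joint_count)
    then show "?w M \<le> ?w N"
      by (rule joint_class_weight_le[OF assms])
  qed
  also have "\<dots> \<le> (length ys + 1) ^ (CARD('a) * CARD('b)) * ?w N"
    using card_joint_count_image_le[where 'a = 'a, of ys] by (simp add: T_def L_def)
  finally show ?thesis .
qed

lemma card_nth_eq_joint_count:
  assumes "length xs = length ys"
  shows "card {i. i < length ys \<and> xs ! i = a \<and> ys ! i = b} = joint_count xs ys (a, b)"
proof -
  have "joint_count xs ys (a, b) = card {i. i < length (zip xs ys) \<and> (a, b) = zip xs ys ! i}"
    by (simp add: joint_count_def count_mset count_list_eq_length_filter length_filter_conv_card)
  also have "\<dots> = card {i. i < length ys \<and> xs ! i = a \<and> ys ! i = b}"
    using assms by (intro arg_cong[where f = card]) (auto simp: nth_zip)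
  finally show ?thesis by simp
qed

lemma joint_type_eq_joint_count:
  "length xs = length ys \<Longrightarrow> joint_type xs ys = (\<lambda>p. real (joint_count xs ys p) / real (length ys))"
  by (auto simp: fun_eq_iff joint_type_def card_nth_eq_joint_count)

lemma seq_type_eq_count: "seq_type ys = (\<lambda>b. real (count (mset ys) b) / real (length ys))"
  unfolding seq_type_def count_mset count_list_eq_length_filter length_filter_conv_card
  by (auto simp: fun_eq_iff intro!: arg_cong[where f = card])

lemma joint_n_type_obtain_counts:
  fixes Q :: "'a::finite \<times> 'b::finite \<Rightarrow> real"
  assumes "n > 0" "is_joint_n_type n Q" "length ys = n" "seq_type ys = marg_Y Q"
  obtains N where "Q = (\<lambda>p. real (N p) / real n)" "column_sum N = count (mset ys)"
    "cond_type_class Q ys = joint_class ys N"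
proof -
  obtain xs0 ys0 where "length xs0 = n" "length ys0 = n" "Q = joint_type xs0 ys0"
    using assms(2) unfolding is_joint_n_type_def by blast
  then have Q: "Q = (\<lambda>p. real (joint_count xs0 ys0 p) / real n)"
    by (simp add: joint_type_eq_joint_count)
  have "real (count (mset ys) b) / real n = real (column_sum (joint_count xs0 ys0) b) / real n" for b
    using fun_cong[OF assms(4), of b] assms(3)
    by (simp add: seq_type_eq_count marg_Y_def Q column_sum_def sum_divide_distrib)
  then have "column_sum (joint_count xs0 ys0) = count (mset ys)"
    using assms(1) by (auto simp: fun_eq_iff)
  moreover have "cond_type_class Q ys = joint_class ys (joint_count xs0 ys0)"
    using assms(1,3) by (auto simp: cond_type_class_def joint_class_def joint_type_eq_joint_count Q fun_eq_iff)
  ultimately show thesis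
    using Q that by blast
qed

lemma prod_lessThan_length_nth: "(\<Prod>i<length zs. f (zs ! i)) = prod_list (map f zs)"
  by (induction zs) (simp_all add: prod.lessThan_Suc_shift del: prod.lessThan_Suc)

lemma p_cond_eq_card_joint_class:
  fixes N :: "'a::finite \<times> 'b::finite \<Rightarrow> nat"
  assumes "cond_type_class Q ys = joint_class ys N"
  shows "p_cond PX Q ys = real (card (joint_class ys N)) * (\<Prod>p\<in>UNIV. PX (fst p) ^ N p)"
proof -
  have "(\<Prod>i<length ys. PX (xs ! i)) = (\<Prod>p\<in>UNIV. PX (fst p) ^ N p)" if "xs \<in> joint_class ys N" for xs
  proof -
    from that have len: "length xs = length ys" and N: "joint_count xs ys = N"
      by (auto simp: joint_class_def)
    have "(\<Prod>i<length ys. PX (xs ! i)) = (\<Prod>i<length (zip xs ys). PX (fst (zip xs ys ! i)))"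
      using len by (intro prod.cong) auto
    also have "\<dots> = prod_list (map (\<lambda>p. PX (fst p)) (zip xs ys))"
      by (rule prod_lessThan_length_nth)
    also have "\<dots> = (\<Prod>p\<in>UNIV. PX (fst p) ^ N p)"
      by (simp add: prod_list_map_eq_prod_count joint_count_def N[symmetric])
    finally show ?thesis .
  qed
  then show ?thesis
    unfolding p_cond_def assms by simp
qed

lemma weighted_card_joint_class_bounds:
  fixes N :: "'a::finite \<times> 'b::finite \<Rightarrow> nat"
  assumes "column_sum N = count (mset ys)" and "w \<ge> 0"
    and "e * (\<Prod>p\<in>UNIV. real (N p) ^ N p) = w * (\<Prod>b\<in>UNIV. real (count (mset ys) b) ^ count (mset ys) b)"
  shows "real (card (joint_class ys N)) * w \<le> e"
    and "e \<le> (real (length ys) + 1) ^ (CARD('a) * CARD('b)) * (real (card (joint_class ys N)) * w)"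
proof -
  define K where "K = real (card (joint_class ys N))"
  define A where "A = (\<Prod>b\<in>UNIV. real (count (mset ys) b) ^ count (mset ys) b)"
  define B where "B = (\<Prod>p\<in>UNIV. real (N p) ^ N p)"
  define C where "C = (real (length ys) + 1) ^ (CARD('a) * CARD('b))"
  have eB: "e * B = w * A"
    using assms(3) by (simp add: A_def B_def)
  have B_pos: "B > 0"
    unfolding B_def by (intro prod_pos) (auto simp: zero_less_power_eq)
  have "K * B \<le> A"
    using of_nat_mono[OF card_joint_class_upper[OF assms(1)], where 'a = real]
    unfolding K_def A_def B_def of_nat_mult of_nat_prod of_nat_power .
  then have "(K * w) * B \<le> w * A"
    using assms(2) mult_left_mono[of "K * B" A w] by (simp add: mult_ac)
  then have "(K * w) * B \<le> e * B"
    by (simp only: eB)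
  then show "K * w \<le> e"
    unfolding K_def using B_pos by simp
  have "A \<le> C * (K * B)"
    using of_nat_mono[OF card_joint_class_lower[OF assms(1)], where 'a = real]
    unfolding K_def A_def B_def C_def of_nat_mult of_nat_prod of_nat_power of_nat_add of_nat_1 .
  then have "w * A \<le> (C * (K * w)) * B"
    using assms(2) mult_left_mono[of A "C * (K * B)" w] by (simp add: mult_ac)
  then have "e * B \<le> (C * (K * w)) * B"
    by (simp only: eB)
  then show "e \<le> C * (K * w)"
    unfolding K_def C_def using B_pos by simp
qed

lemma prod_power_column_sum:
  fixes N :: "'a::finite \<times> 'b::finite \<Rightarrow> nat" and f :: "'b \<Rightarrow> 'c::comm_monoid_mult"
  shows "(\<Prod>p\<in>UNIV. f (snd p) ^ N p) = (\<Prod>b\<in>UNIV. f b ^ column_sum N b)"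
proof -
  have "(\<Prod>p\<in>UNIV. f (snd p) ^ N p) = (\<Prod>a\<in>UNIV. \<Prod>b\<in>UNIV. f b ^ N (a, b))"
    by (simp add: prod.cartesian_product case_prod_unfold flip: UNIV_Times_UNIV)
  also have "\<dots> = (\<Prod>b\<in>UNIV. f b ^ column_sum N b)"
    by (subst prod.swap) (simp add: column_sum_def power_sum)
  finally show ?thesis .
qed

lemma rel_entropy_joint_counts:
  fixes N :: "'a::finite \<times> 'b::finite \<Rightarrow> nat" and PX :: "'a \<Rightarrow> real"
  assumes "n > 0" and PX_pos: "\<And>p. N p > 0 \<Longrightarrow> PX (fst p) > 0"
  obtains d where
    "rel_entropy (\<lambda>p. real (N p) / real n) (prod_ref PX (\<lambda>b. real (column_sum N b) / real n)) = ereal d"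
    "exp (- (real n * d)) * (\<Prod>p\<in>UNIV. real (N p) ^ N p)
       = (\<Prod>p\<in>UNIV. PX (fst p) ^ N p) * (\<Prod>b\<in>UNIV. real (column_sum N b) ^ column_sum N b)"
proof -
  define Q where "Q p = real (N p) / real n" for p
  define P where "P = prod_ref PX (\<lambda>b. real (column_sum N b) / real n)"
  define r where "r p = PX (fst p) * real (column_sum N (snd p)) / real (N p)" for p
  have col_pos: "column_sum N (snd p) > 0" if "N p > 0" for p
    using that member_le_sum[of "fst p" UNIV "\<lambda>a. N (a, snd p)"] by (auto simp: column_sum_def)
  have r_pos: "r p > 0" if "N p > 0" for p
    using that PX_pos col_pos by (simp add: r_def)
  have QP: "real (N p) / (real n * P p) = inverse (r p)" for p
    using assms(1) by (simp add: Q_def P_def r_def prod_ref_def case_prod_unfold field_simps)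
  define d where "d = - (\<Sum>p\<in>UNIV. if N p = 0 then 0 else real (N p) * ln (r p)) / real n"
  have "\<not> (\<exists>p. Q p > 0 \<and> P p = 0)"
  proof (clarify)
    fix p assume "Q p > 0" "P p = 0"
    then have "N p > 0"
      by (simp add: Q_def zero_less_divide_iff)
    with \<open>P p = 0\<close> show False
      using assms(1) PX_pos[of p] col_pos[of p] by (simp add: P_def prod_ref_def case_prod_unfold)
  qed
  moreover have "(if Q p = 0 then 0 else Q p * ln (Q p / P p))
      = - (if N p = 0 then 0 else real (N p) * ln (r p)) / real n" for p
    using assms(1) r_pos[of p] by (cases "N p = 0") (simp_all add: QP ln_inverse Q_def)
  ultimately have entropy: "rel_entropy Q P = ereal d"
    by (simp add: rel_entropy_def d_def sum_divide_distrib sum_negf)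
  have "exp (- (real n * d)) = (\<Prod>p\<in>UNIV. r p ^ N p)"
    using assms(1) r_pos by (auto simp: d_def exp_sum exp_of_nat_mult intro!: prod.cong)
  then have "exp (- (real n * d)) * (\<Prod>p\<in>UNIV. real (N p) ^ N p)
      = (\<Prod>p\<in>UNIV. (PX (fst p) * real (column_sum N (snd p))) ^ N p)"
    by (auto simp: r_def prod.distrib[symmetric] power_mult_distrib[symmetric] intro!: prod.cong)
  also have "\<dots> = (\<Prod>p\<in>UNIV. PX (fst p) ^ N p) * (\<Prod>p\<in>UNIV. real (column_sum N (snd p)) ^ N p)"
    by (simp add: power_mult_distrib prod.distrib)
  also have "\<dots> = (\<Prod>p\<in>UNIV. PX (fst p) ^ N p) * (\<Prod>b\<in>UNIV. real (column_sum N b) ^ column_sum N b)"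
    using prod_power_column_sum[of "\<lambda>b. real (column_sum N b)" N] by simp
  finally show thesis
    using that entropy unfolding Q_def[abs_def] P_def by blast
qed

lemma neg_min_bounds:
  fixes a b c l s :: real
  assumes "- a - c \<le> l" and "l \<le> - a" and "s \<ge> 0"
  shows "a + max 0 (b - a) / 2 \<le> - min l (l / 2 - b / 2 - s)"
    and "- min l (l / 2 - b / 2 - s) \<le> a + max 0 (b - a) / 2 + c + s"
proof -
  show "a + max 0 (b - a) / 2 \<le> - min l (l / 2 - b / 2 - s)"
    using assms unfolding min_def max_def by argo
  show "- min l (l / 2 - b / 2 - s) \<le> a + max 0 (b - a) / 2 + c + s"
    using assms unfolding min_def max_def by argo
qed

lemma neg_norm_log_half_frakY_bounds:
  fixes n c :: nat and d R :: real
  assumes "n > 0"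
    and "p_cond PX Q ys \<le> exp (- (real n * d))"
    and "exp (- (real n * d)) \<le> (real n + 1) ^ c * p_cond PX Q ys"
  defines "D \<equiv> ereal d + ereal (1/2) * pos_part (ereal R - ereal d)"
  shows "D \<le> neg_norm_log n ((1/2) * frakY PX (exp (real n * R)) Q ys)"
    and "neg_norm_log n ((1/2) * frakY PX (exp (real n * R)) Q ys)
         \<le> D + ereal (real c / real n * ln (real n + 1) + 1 / real n * ln 2)"
proof -
  define p where "p = p_cond PX Q ys"
  define z where "z = (1/2) * frakY PX (exp (real n * R)) Q ys"
  define l where "l = min (ln p) (ln p / 2 - real n * R / 2 - ln 2)"
  have p_pos: "p > 0"
    using assms(3) zero_less_mult_iff[of "(real n + 1) ^ c" p] exp_gt_zero[of "- (real n * d)"]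
    by (auto simp: p_def)
  have ln_p: "- (real n * d) - real c * ln (real n + 1) \<le> ln p" "ln p \<le> - (real n * d)"
    using assms(2,3) p_pos ln_le_cancel_iff[of "exp (- (real n * d))" "(real n + 1) ^ c * p"]
      ln_le_cancel_iff[of p "exp (- (real n * d))"]
    by (simp_all add: p_def ln_mult ln_realpow)
  define q where "q = exp (- (real n * R) / 2) * sqrt p / 2"
  have q_pos: "q > 0"
    using p_pos by (simp add: q_def)
  have "z = min p q"
    by (simp add: z_def q_def frakY_def p_def min_def powr_def)
  moreover have "ln (min p q) = min (ln p) (ln q)"
    using p_pos q_pos by (simp add: min_def)
  moreover have "ln q = ln p / 2 - real n * R / 2 - ln 2"
    using p_pos by (simp add: q_def ln_div ln_mult ln_sqrt)
  ultimately have "z > 0" "ln z = l"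
    using p_pos q_pos by (simp_all add: l_def)
  then have z: "neg_norm_log n z = ereal (- l / real n)"
    by (simp add: neg_norm_log_def)
  have D: "D = ereal (d + max 0 (R - d) / 2)"
    by (simp add: D_def pos_part_def max_def)
  have "real n * (d + max 0 (R - d) / 2) = real n * d + max 0 (real n * R - real n * d) / 2"
    using assms(1) by (simp add: max_def algebra_simps)
  then have "real n * (d + max 0 (R - d) / 2) \<le> - l"
    "- l \<le> real n * (d + max 0 (R - d) / 2) + real c * ln (real n + 1) + ln 2"
    using neg_min_bounds[of "real n * d" "real c * ln (real n + 1)" "ln p" "ln 2" "real n * R"] ln_p
    by (simp_all add: l_def)
  then show "D \<le> neg_norm_log n z"
    and "neg_norm_log n z \<le> D + ereal (real c / real n * ln (real n + 1) + 1 / real n * ln 2)"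
    using assms(1) unfolding z D by (simp_all add: field_simps)
qed

lemma p_cond_rel_entropy_cases:
  fixes PX :: "'a::finite \<Rightarrow> real" and Q :: "'a \<times> 'b::finite \<Rightarrow> real"
  assumes "n > 0" and "\<forall>a. PX a \<ge> 0" and "is_joint_n_type n Q"
    and "length ys = n" and "seq_type ys = marg_Y Q"
  obtains (degenerate) "p_cond PX Q ys = 0" "rel_entropy Q (prod_ref PX (marg_Y Q)) = \<infinity>"
  | (finite) d where "rel_entropy Q (prod_ref PX (marg_Y Q)) = ereal d"
      "p_cond PX Q ys \<le> exp (- (real n * d))"
      "exp (- (real n * d)) \<le> (real n + 1) ^ (CARD('a) * CARD('b)) * p_cond PX Q ys"
proof -
  obtain N where Q: "Q = (\<lambda>p. real (N p) / real n)" and col: "column_sum N = count (mset ys)"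
    and cls: "cond_type_class Q ys = joint_class ys N"
    using joint_n_type_obtain_counts[OF assms(1,3,4,5)] by blast
  have marg: "marg_Y (\<lambda>p. real (N p) / real n) = (\<lambda>b. real (column_sum N b) / real n)"
    by (simp add: fun_eq_iff marg_Y_def column_sum_def sum_divide_distrib)
  have p: "p_cond PX Q ys = real (card (joint_class ys N)) * (\<Prod>p\<in>UNIV. PX (fst p) ^ N p)"
    by (rule p_cond_eq_card_joint_class[OF cls])
  show thesis
  proof (cases "\<exists>p. N p > 0 \<and> PX (fst p) = 0")
    case True
    then obtain a b where "N (a, b) > 0" "PX a = 0" by auto
    then have "Q (a, b) > 0 \<and> prod_ref PX (marg_Y Q) (a, b) = 0"
      using assms(1) by (simp add: Q marg prod_ref_def)
    then have "rel_entropy Q (prod_ref PX (marg_Y Q)) = \<infinity>"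
      unfolding rel_entropy_def by auto
    moreover have "p_cond PX Q ys = 0"
      unfolding p using \<open>N (a, b) > 0\<close> \<open>PX a = 0\<close> by (auto intro!: prod_zero bexI[of _ "(a, b)"])
    ultimately show thesis
      by (rule degenerate[rotated])
  next
    case False
    then have PX_pos: "PX (fst p) > 0" if "N p > 0" for p
      using that assms(2) by (metis less_eq_real_def)
    obtain d where entropy: "rel_entropy Q (prod_ref PX (marg_Y Q)) = ereal d"
      and types: "exp (- (real n * d)) * (\<Prod>p\<in>UNIV. real (N p) ^ N p)
        = (\<Prod>p\<in>UNIV. PX (fst p) ^ N p) * (\<Prod>b\<in>UNIV. real (column_sum N b) ^ column_sum N b)"
      using rel_entropy_joint_counts[of n N PX, OF assms(1) PX_pos] unfolding Q marg .
    have "(\<Prod>p\<in>UNIV. PX (fst p) ^ N p) \<ge> 0"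
      using assms(2) by (simp add: prod_nonneg)
    from weighted_card_joint_class_bounds[OF col this types[unfolded col]]
    have "p_cond PX Q ys \<le> exp (- (real n * d))"
      "exp (- (real n * d)) \<le> (real n + 1) ^ (CARD('a) * CARD('b)) * p_cond PX Q ys"
      by (simp_all add: p assms(4))
    with entropy show thesis
      by (rule finite)
  qed
qed

theorem lemma13:
  fixes PX :: "'a::finite \<Rightarrow> real"
    and Q :: "'a \<times> 'b::finite \<Rightarrow> real"
    and ys :: "'b list"
    and R :: real and n :: nat
  assumes "n > 0"
    and "\<forall>a. PX a \<ge> 0" and "(\<Sum>a\<in>UNIV. PX a) = 1"
    and "R \<ge> 0"
    and "is_joint_n_type n Q"
    and "length ys = n" and "seq_type ys = marg_Y Q"
  shows
    "rel_entropy Q (prod_ref PX (marg_Y Q))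
       + ereal (1/2) * pos_part (ereal R - rel_entropy Q (prod_ref PX (marg_Y Q)))
     \<le> neg_norm_log n ((1/2) * frakY PX (exp (real n * R)) Q ys)
   \<and> neg_norm_log n ((1/2) * frakY PX (exp (real n * R)) Q ys)
     \<le> rel_entropy Q (prod_ref PX (marg_Y Q))
       + ereal (1/2) * pos_part (ereal R - rel_entropy Q (prod_ref PX (marg_Y Q)))
       + ereal (real (CARD('a)) * real (CARD('b)) / real n * ln (real n + 1)
                + 1 / real n * ln 2)"
proof (rule p_cond_rel_entropy_cases[OF assms(1,2,5,6,7)])
  assume "p_cond PX Q ys = 0" and "rel_entropy Q (prod_ref PX (marg_Y Q)) = \<infinity>"
  then show ?thesis
    by (simp add: frakY_def neg_norm_log_def pos_part_def)
next
  fix d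
  assume entropy: "rel_entropy Q (prod_ref PX (marg_Y Q)) = ereal d"
    and "p_cond PX Q ys \<le> exp (- (real n * d))"
    and "exp (- (real n * d)) \<le> (real n + 1) ^ (CARD('a) * CARD('b)) * p_cond PX Q ys"
  from neg_norm_log_half_frakY_bounds[OF assms(1) this(2,3), of R]
  show ?thesis
    unfolding entropy of_nat_mult by blast
qed

end
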